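(* Let $M$ be a matroid on $S$ and $N$ a matroid on $T$ with $S\cap T=\emptyset$, and let $L=M\mathbin{\Box} N$. Then for all $A\subseteq S\cup T$, $$\rho_L(A)=\rho_M(A\cap S)+\rho_N(A\cap T)+\min\{\lambda_M(A\cap S),\ \nu_N(A\cap T)\}.$$
   Context: For a matroid $M$ on $S$ write $\rho_M$ for rank, $\rho(M)=\rho_M(S)$, $\nu_M(A)=|A|-\rho_M(A)$ (nullity), $\lambda_M(A)=\rho(M)-\rho_M(A)$ (rank-lack). For matroids $M$ on $S$ and $N$ on $T$ with $S\cap T=\emptyset$, the free product $M\mathbin{\Box} N$ is the matroid on $S\cup T$ whose independent sets are those $A$ with $A\cap S$ independent in $M$ and $\lambda_M(A\cap S)\geq\nu_N(A\cap T)$. *)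

theory Defs
  imports Main
begin

definition matroid :: "'a set \<Rightarrow> ('a set \<Rightarrow> bool) \<Rightarrow> bool" where
  "matroid E indep \<longleftrightarrow>
     finite E \<and> indep {} \<and>
     (\<forall>X. indep X \<longrightarrow> X \<subseteq> E) \<and>
     (\<forall>X Y. indep Y \<and> X \<subseteq> Y \<longrightarrow> indep X) \<and>
     (\<forall>X Y. indep X \<and> indep Y \<and> card X < card Y \<longrightarrow> (\<exists>y\<in>Y - X. indep (insert y X)))"

definition rank :: "('a set \<Rightarrow> bool) \<Rightarrow> 'a set \<Rightarrow> nat" where
  "rank indep A = Max (card ` {X. X \<subseteq> A \<and> indep X})"

definition nullity :: "('a set \<Rightarrow> bool) \<Rightarrow> 'a set \<Rightarrow> nat" where
  "nullity indep A = card A - rank indep A"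

definition ranklack :: "'a set \<Rightarrow> ('a set \<Rightarrow> bool) \<Rightarrow> 'a set \<Rightarrow> nat" where
  "ranklack E indep A = rank indep E - rank indep A"

definition free_product_indep ::
  "'a set \<Rightarrow> ('a set \<Rightarrow> bool) \<Rightarrow> 'a set \<Rightarrow> ('a set \<Rightarrow> bool) \<Rightarrow> 'a set \<Rightarrow> bool" where
  "free_product_indep S indM T indN A \<longleftrightarrow>
     A \<subseteq> S \<union> T \<and> indM (A \<inter> S) \<and>
     ranklack S indM (A \<inter> S) \<ge> nullity indN (A \<inter> T)"

end

theory Submission
  imports Defs
begin

text \<open>
  An independent set X of the free product consists of an M-independent part X \<inter> S together
  with an arbitrary part X \<inter> T whose N-nullity is paid for by the rank that X \<inter> S leaves
  unused in M. Since nullity is monotone, an independent X \<subseteq> A therefore has at most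
  rank_M(A \<inter> S) + rank_N(A \<inter> T) + min(\<lambda>_M(A \<inter> S), \<nu>_N(A \<inter> T)) elements.
  Conversely, a basis of A \<inter> S, a basis of A \<inter> T and that minimum number of further
  elements of A \<inter> T form an independent set of exactly this size.
\<close>

lemma card_le_rank:
  assumes "finite A" "X \<subseteq> A" "ind X"
  shows "card X \<le> rank ind A"
  unfolding rank_def using assms by (intro Max_ge) auto

lemma rank_attained:
  assumes "finite A" "ind {}"
  obtains X where "X \<subseteq> A" "ind X" "card X = rank ind A"
proof -
  have "rank ind A \<in> card ` {X. X \<subseteq> A \<and> ind X}"
    unfolding rank_def using assms by (intro Max_in) auto
  then show ?thesis using that by auto
qed

lemma rank_le_card:
  assumes "finite A" "ind {}"
  shows "rank ind A \<le> card A"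
proof -
  obtain X where "X \<subseteq> A" "card X = rank ind A"
    using rank_attained assms by metis
  then show ?thesis using assms(1) card_mono by metis
qed

lemma rank_indep:
  assumes "finite X" "ind X" "ind {}"
  shows "rank ind X = card X"
  using card_le_rank[of X X ind] rank_le_card[of X ind] assms by simp

lemma rank_mono:
  assumes "finite Z" "Y \<subseteq> Z" "ind {}"
  shows "rank ind Y \<le> rank ind Z"
proof -
  obtain X where "X \<subseteq> Y" "ind X" "card X = rank ind Y"
    using rank_attained[of Y ind] assms finite_subset by metis
  then show ?thesis using card_le_rank[of Z X ind] assms by auto
qed

lemma rank_le_rank_add_card_Diff:
  assumes "ind {}" "\<And>X Y. ind Y \<Longrightarrow> X \<subseteq> Y \<Longrightarrow> ind X" "finite Z" "Y \<subseteq> Z"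
  shows "rank ind Z \<le> rank ind Y + card (Z - Y)"
proof -
  obtain B where B: "B \<subseteq> Z" "ind B" "card B = rank ind Z"
    using rank_attained[of Z ind] assms by metis
  have "finite Y" using assms finite_subset by metis
  then have "card (B \<inter> Y) \<le> rank ind Y"
    using card_le_rank[of Y "B \<inter> Y" ind] assms(2) B(2) by blast
  moreover have "card B \<le> card (B \<inter> Y) + card (Z - Y)"
  proof -
    have "card B \<le> card ((B \<inter> Y) \<union> (Z - Y))"
      using B(1) assms(3) \<open>finite Y\<close> by (intro card_mono) auto
    also have "\<dots> \<le> card (B \<inter> Y) + card (Z - Y)" by (rule card_Un_le)
    finally show ?thesis .
  qed
  ultimately show ?thesis using B(3) by linarith
qed

lemma nullity_mono:
  assumes "ind {}" "\<And>X Y. ind Y \<Longrightarrow> X \<subseteq> Y \<Longrightarrow> ind X" "finite Z" "Y \<subseteq> Z"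
  shows "nullity ind Y \<le> nullity ind Z"
proof -
  have "card Z = card Y + card (Z - Y)"
    using assms(3,4) by (metis card_Diff_subset card_mono finite_subset le_add_diff_inverse)
  moreover have "rank ind Y \<le> card Y"
    using rank_le_card assms finite_subset by metis
  moreover have "rank ind Z \<le> rank ind Y + card (Z - Y)"
    by (rule rank_le_rank_add_card_Diff) (use assms in blast)+
  ultimately show ?thesis unfolding nullity_def by linarith
qed

lemma rank_eq_card_of_basis:
  assumes "finite Z" "J \<subseteq> Y" "Y \<subseteq> Z" "ind J" "card J = rank ind Z" "ind {}"
  shows "rank ind Y = card J"
  using card_le_rank[of Y J ind] rank_mono[of Z Y ind] assms finite_subset
  by (metis le_antisym)

lemma free_product_indep_empty:
  assumes "matroid S indM"
  shows "free_product_indep S indM T indN {}"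
  using assms unfolding matroid_def free_product_indep_def nullity_def by simp

lemma card_free_product_indep_le:
  assumes M: "matroid S indM" and N: "matroid T indN" and "S \<inter> T = {}"
    and "X \<subseteq> A" and X: "free_product_indep S indM T indN X"
  shows "card X \<le> rank indM (A \<inter> S) + rank indN (A \<inter> T)
                    + min (ranklack S indM (A \<inter> S)) (nullity indN (A \<inter> T))"
proof -
  have "finite S" "indM {}" and "finite T" "indN {}"
    and downN: "\<And>X Y. indN Y \<Longrightarrow> X \<subseteq> Y \<Longrightarrow> indN X"
    using M N unfolding matroid_def by blast+
  have "X \<subseteq> S \<union> T" and indXS: "indM (X \<inter> S)"
    and null_le_lack: "nullity indN (X \<inter> T) \<le> ranklack S indM (X \<inter> S)"
    using X unfolding free_product_indep_def by blast+
  have "finite X" using \<open>X \<subseteq> S \<union> T\<close> \<open>finite S\<close> \<open>finite T\<close> finite_subset by blast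
  have "X = (X \<inter> S) \<union> (X \<inter> T)" using \<open>X \<subseteq> S \<union> T\<close> by blast
  then have "card X = card (X \<inter> S) + card (X \<inter> T)"
    using \<open>finite X\<close> \<open>S \<inter> T = {}\<close> card_Un_disjoint[of "X \<inter> S" "X \<inter> T"] by auto
  moreover have "card (X \<inter> S) \<le> rank indM (A \<inter> S)"
    using card_le_rank[of "A \<inter> S" "X \<inter> S" indM] \<open>finite S\<close> \<open>X \<subseteq> A\<close> indXS by blast
  moreover have "rank indM (A \<inter> S) \<le> rank indM S"
    using rank_mono[of S "A \<inter> S" indM] \<open>finite S\<close> \<open>indM {}\<close> by blast
  moreover have "rank indM (X \<inter> S) = card (X \<inter> S)"
    using rank_indep[of "X \<inter> S" indM] \<open>finite X\<close> indXS \<open>indM {}\<close> by blast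
  moreover have "finite (A \<inter> T)" "X \<inter> T \<subseteq> A \<inter> T"
    using \<open>finite T\<close> \<open>X \<subseteq> A\<close> by auto
  then have "rank indN (X \<inter> T) \<le> rank indN (A \<inter> T)"
    and "nullity indN (X \<inter> T) \<le> nullity indN (A \<inter> T)"
    using rank_mono[of "A \<inter> T" "X \<inter> T" indN] nullity_mono[of indN "A \<inter> T" "X \<inter> T"]
      \<open>indN {}\<close> downN by blast+
  moreover have "rank indN (X \<inter> T) \<le> card (X \<inter> T)"
    using rank_le_card[of "X \<inter> T" indN] \<open>finite X\<close> \<open>indN {}\<close> by blast
  ultimately show ?thesis
    using null_le_lack unfolding nullity_def ranklack_def by linarith
qed

lemma free_product_indep_attains:
  assumes M: "matroid S indM" and N: "matroid T indN" and "S \<inter> T = {}"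
  obtains X where "X \<subseteq> A" "free_product_indep S indM T indN X"
    "card X = rank indM (A \<inter> S) + rank indN (A \<inter> T)
              + min (ranklack S indM (A \<inter> S)) (nullity indN (A \<inter> T))"
proof -
  have "finite S" "indM {}" and "finite T" "indN {}"
    using M N unfolding matroid_def by blast+
  define k where "k = min (ranklack S indM (A \<inter> S)) (nullity indN (A \<inter> T))"
  obtain I where I: "I \<subseteq> A \<inter> S" "indM I" "card I = rank indM (A \<inter> S)"
    using rank_attained[of "A \<inter> S" indM] \<open>finite S\<close> \<open>indM {}\<close> by blast
  obtain J where J: "J \<subseteq> A \<inter> T" "indN J" "card J = rank indN (A \<inter> T)"
    using rank_attained[of "A \<inter> T" indN] \<open>finite T\<close> \<open>indN {}\<close> by blast
  have "finite J" using J(1) \<open>finite T\<close> finite_subset by blast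
  then have "card (A \<inter> T - J) = nullity indN (A \<inter> T)"
    using J unfolding nullity_def by (simp add: card_Diff_subset)
  then obtain K where K: "K \<subseteq> A \<inter> T - J" "card K = k"
    unfolding k_def by (metis min.cobounded2 obtain_subset_with_card_n)
  have "finite I" "finite K"
    using I(1) K(1) \<open>finite S\<close> \<open>finite T\<close> finite_subset by blast+
  define X where "X = I \<union> (J \<union> K)"
  have XS: "X \<inter> S = I" and XT: "X \<inter> T = J \<union> K"
    using I(1) J(1) K(1) \<open>S \<inter> T = {}\<close> unfolding X_def by auto
  have "card (J \<union> K) = card J + k"
    using K \<open>finite J\<close> \<open>finite K\<close> card_Un_disjoint[of J K] by auto
  moreover have "rank indN (J \<union> K) = card J"
    using rank_eq_card_of_basis[of "A \<inter> T" "J" "J \<union> K" indN] J K \<open>finite T\<close> \<open>indN {}\<close>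
    by auto
  ultimately have "nullity indN (X \<inter> T) = k"
    unfolding XT nullity_def by simp
  moreover have "ranklack S indM (X \<inter> S) = ranklack S indM (A \<inter> S)"
    using rank_indep[of I indM] \<open>finite I\<close> I \<open>indM {}\<close> unfolding XS ranklack_def by simp
  moreover have "X \<subseteq> S \<union> T" using I(1) J(1) K(1) unfolding X_def by auto
  ultimately have "free_product_indep S indM T indN X"
    unfolding free_product_indep_def using I(2) XS by (simp add: k_def)
  moreover have "X \<subseteq> A" using I(1) J(1) K(1) unfolding X_def by auto
  moreover have "card X = card I + card J + k"
    using \<open>card (J \<union> K) = card J + k\<close> XS XT \<open>finite I\<close> \<open>finite J\<close> \<open>finite K\<close>
      \<open>S \<inter> T = {}\<close> I(1) J(1) K(1)
    unfolding X_def by (subst card_Un_disjoint) auto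
  ultimately show ?thesis using that I(3) J(3) unfolding k_def by metis
qed

theorem proposition3p4:
  fixes S T :: "'a set" and indM indN :: "'a set \<Rightarrow> bool" and A :: "'a set"
  assumes "matroid S indM" and "matroid T indN" and "S \<inter> T = {}"
    and "A \<subseteq> S \<union> T"
  shows "rank (free_product_indep S indM T indN) A =
           rank indM (A \<inter> S) + rank indN (A \<inter> T)
           + min (ranklack S indM (A \<inter> S)) (nullity indN (A \<inter> T))"
    (is "rank ?L A = ?r")
proof (rule antisym)
  have "finite A"
    using assms(1,2,4) unfolding matroid_def by (meson finite_Un finite_subset)
  then obtain X where "X \<subseteq> A" "?L X" "card X = rank ?L A"
    using rank_attained[of A ?L] free_product_indep_empty[OF assms(1)] by blast
  then show "rank ?L A \<le> ?r"
    using card_free_product_indep_le[OF assms(1-3)] by metis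
  obtain Y where "Y \<subseteq> A" "?L Y" "card Y = ?r"
    using free_product_indep_attains[OF assms(1-3)] by blast
  then show "?r \<le> rank ?L A"
    using card_le_rank[of A Y ?L] \<open>finite A\<close> by simp
qed

end
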